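(* Consider the system of ordinary differential equations \[ \begin{aligned} \frac{dS}{dt} &= \Lambda + \eta R + \theta V - (\beta I + \pi + \mu)S,\\ \frac{dV}{dt} &= \pi S - (\theta + \mu)V,\\ \frac{dE}{dt} &= \beta S I - (\gamma + \mu)E,\\ \frac{dI}{dt} &= \gamma E - (\delta + \tau + \mu)I,\\ \frac{dT}{dt} &= \delta I - (\alpha + \omega + \mu)T,\\ \frac{dR}{dt} &= \alpha T - (\eta + \mu)R, \end{aligned} \] where $\Lambda,\beta,\gamma,\mu,\pi,\eta,\theta,\delta,\tau,\alpha,\omega$ are positive constants. Let \[ \mathscr{E}_0=\left(\frac{\Lambda(\theta+\mu)}{\mu(\theta+\pi+\mu)},\ \frac{\Lambda\pi}{\mu(\theta+\pi+\mu)},\ 0,0,0,0\right) \] be the disease-free equilibrium (in the coordinates $(S,V,E,I,T,R)$) and \[ \mathscr{R}_v=\frac{\Lambda\beta\gamma(\theta+\mu)}{\mu(\delta+\tau+\mu)(\theta+\pi+\mu)(\gamma+\mu)}. \] Then $\mathscr{E}_0$ is locally asymptotically stable if $\mathscr{R}_v<1$ and unstable if $\mathscr{R}_v>1$.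
   Context: SVEITRS model of tuberculosis transmission: $S,V,E,I,T,R$ denote the susceptible, vaccinated, exposed, infectious, treated and recovered populations; all parameters positive. $\mathscr{R}_v$ is called the effective (control) reproduction number. *)

theory Defs
  imports "HOL-Analysis.Analysis"
begin

definition sveitrs ::
  "real \<Rightarrow> real \<Rightarrow> real \<Rightarrow> real \<Rightarrow> real \<Rightarrow> real \<Rightarrow> real \<Rightarrow> real \<Rightarrow> real \<Rightarrow> real \<Rightarrow> real
   \<Rightarrow> real^6 \<Rightarrow> real^6" where
  "sveitrs \<Lambda> \<beta> \<gamma> \<mu> \<pi> \<eta> \<theta> \<delta> \<tau> \<alpha> \<omega> x =
    (let S = x$1; V = x$2; E = x$3; I = x$4; T = x$5; R = x$6 in
     (\<chi> i. if i = 1 then \<Lambda> + \<eta> * R + \<theta> * V - (\<beta> * I + \<pi> + \<mu>) * S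
           else if i = 2 then \<pi> * S - (\<theta> + \<mu>) * V
           else if i = 3 then \<beta> * S * I - (\<gamma> + \<mu>) * E
           else if i = 4 then \<gamma> * E - (\<delta> + \<tau> + \<mu>) * I
           else if i = 5 then \<delta> * I - (\<alpha> + \<omega> + \<mu>) * T
           else \<alpha> * T - (\<eta> + \<mu>) * R))"

definition dfe :: "real \<Rightarrow> real \<Rightarrow> real \<Rightarrow> real \<Rightarrow> real^6" where
  "dfe \<Lambda> \<mu> \<pi> \<theta> =
    (\<chi> i. if i = 1 then \<Lambda> * (\<theta> + \<mu>) / (\<mu> * (\<theta> + \<pi> + \<mu>))
          else if i = 2 then \<Lambda> * \<pi> / (\<mu> * (\<theta> + \<pi> + \<mu>))
          else 0)"

definition Rv :: "real \<Rightarrow> real \<Rightarrow> real \<Rightarrow> real \<Rightarrow> real \<Rightarrow> real \<Rightarrow> real \<Rightarrow> real \<Rightarrow> real" where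
  "Rv \<Lambda> \<beta> \<gamma> \<mu> \<pi> \<theta> \<delta> \<tau> =
    \<Lambda> * \<beta> * \<gamma> * (\<theta> + \<mu>) / (\<mu> * (\<delta> + \<tau> + \<mu>) * (\<theta> + \<pi> + \<mu>) * (\<gamma> + \<mu>))"

text \<open>x is a solution of x' = f(x) on the interval J (one-sided derivatives at endpoints).\<close>
definition ode_solution_on :: "('a::real_normed_vector \<Rightarrow> 'a) \<Rightarrow> (real \<Rightarrow> 'a) \<Rightarrow> real set \<Rightarrow> bool" where
  "ode_solution_on f x J \<longleftrightarrow> (\<forall>t\<in>J. (x has_vector_derivative f (x t)) (at t within J))"

text \<open>Lyapunov stability: every solution starting close to e stays close to e
  for as long as it exists (tested on all compact forward intervals [0,T]).\<close>
definition lyapunov_stable :: "('a::real_normed_vector \<Rightarrow> 'a) \<Rightarrow> 'a \<Rightarrow> bool" where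
  "lyapunov_stable f e \<longleftrightarrow>
     (\<forall>\<epsilon>>0. \<exists>\<delta>>0. \<forall>x T. T \<ge> 0 \<and> ode_solution_on f x {0..T} \<and> dist (x 0) e < \<delta>
        \<longrightarrow> (\<forall>t\<in>{0..T}. dist (x t) e < \<epsilon>))"

definition locally_attractive :: "('a::real_normed_vector \<Rightarrow> 'a) \<Rightarrow> 'a \<Rightarrow> bool" where
  "locally_attractive f e \<longleftrightarrow>
     (\<exists>\<delta>>0. \<forall>x. ode_solution_on f x {0..} \<and> dist (x 0) e < \<delta> \<longrightarrow> (x \<longlongrightarrow> e) at_top)"

definition locally_asymptotically_stable :: "('a::real_normed_vector \<Rightarrow> 'a) \<Rightarrow> 'a \<Rightarrow> bool" where
  "locally_asymptotically_stable f e \<longleftrightarrow> lyapunov_stable f e \<and> locally_attractive f e"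

definition unstable_equilibrium :: "('a::real_normed_vector \<Rightarrow> 'a) \<Rightarrow> 'a \<Rightarrow> bool" where
  "unstable_equilibrium f e \<longleftrightarrow> \<not> lyapunov_stable f e"

end

theory Submission
  imports Defs "HOL-Real_Asymp.Real_Asymp"
begin

(* At the disease-free equilibrium the infected classes decouple to first order into the linear
   system E' = beta S0 I - (gamma + mu) E, I' = gamma E - (delta + tau + mu) I, whose threshold is
   Rv = 1.  For Rv < 1 a weighted sum of squares of the deviations from the equilibrium is a strict
   Lyapunov function near it, which gives stability and exponential convergence.  For Rv > 1 the
   quadratic form x E^2 + 2 E I + z I^2 grows at a rate proportional to itself near the equilibrium
   (a Chetaev function), so solutions starting arbitrarily close to it with E > 0 leave a fixed
   ball; such solutions are produced by Picard iteration for the field truncated outside the ball. *)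

section \<open>Solutions of autonomous ODEs\<close>

lemma has_real_derivative_vec_nth:
  fixes x :: "real \<Rightarrow> real^'n"
  assumes "(x has_vector_derivative x') F"
  shows "((\<lambda>t. x t $ i) has_real_derivative x' $ i) F"
  using bounded_linear.has_vector_derivative[OF bounded_linear_vec_nth assms]
  by (simp add: has_real_derivative_iff_has_vector_derivative)

lemma has_real_derivative_nonneg_imp_le:
  fixes h :: "real \<Rightarrow> real"
  assumes "a \<le> b"
    and "\<And>t. t \<in> {a..b} \<Longrightarrow> (h has_real_derivative h' t) (at t within {a..b})"
    and "\<And>t. t \<in> {a..b} \<Longrightarrow> 0 \<le> h' t"
  shows "h a \<le> h b"
proof -
  obtain t where "t \<in> {a..b}" "h b - h a = h' t * (b - a)"
    using mvt_very_simple[of a b h "\<lambda>t. (*) (h' t)"] assms(1,2)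
    by (auto simp: has_field_derivative_def)
  then show ?thesis using assms(1,3) by (metis diff_ge_0_iff_ge mult_nonneg_nonneg)
qed

lemma continuity_bootstrap:
  fixes \<phi> :: "real \<Rightarrow> real"
  assumes cont: "continuous_on {0..T} \<phi>" and start: "\<phi> 0 < L"
    and improve: "\<And>t. t \<in> {0..T} \<Longrightarrow> (\<forall>s\<in>{0..t}. \<phi> s \<le> L) \<Longrightarrow> \<phi> t < L"
  shows "\<forall>t\<in>{0..T}. \<phi> t < L"
proof (rule ccontr)
  assume "\<not> (\<forall>t\<in>{0..T}. \<phi> t < L)"
  then obtain t0 where t0: "t0 \<in> {0..T}" "L \<le> \<phi> t0" by force
  define K where "K = {0..T} \<inter> \<phi> -` {L..}"
  have "compact K"
  proof -
    have "closed K" unfolding K_def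
      using continuous_closed_preimage[OF cont closed_atLeastAtMost closed_atLeast] .
    moreover have "bounded K" unfolding K_def
      by (rule bounded_subset[of "{0..T}"]) auto
    ultimately show ?thesis by (simp add: compact_eq_bounded_closed)
  qed
  moreover have "K \<noteq> {}" using t0 by (auto simp: K_def)
  ultimately obtain t1 where t1: "t1 \<in> K" and first: "\<And>s. s \<in> K \<Longrightarrow> t1 \<le> s"
    by (metis compact_attains_inf)
  have t1T: "t1 \<in> {0..T}" and "L \<le> \<phi> t1" using t1 unfolding K_def by auto
  have before: "\<phi> s < L" if "s \<in> {0..T}" "s < t1" for s
  proof (rule ccontr)
    assume "\<not> \<phi> s < L"
    then have "s \<in> K" using that by (simp add: K_def)
    then show False using first[of s] that by simp
  qed
  have "\<phi> t1 \<le> L"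
  proof (rule ccontr)
    assume above: "\<not> \<phi> t1 \<le> L"
    have "0 \<le> t1" using t1T by simp
    moreover have "continuous_on {0..t1} \<phi>" using cont by (rule continuous_on_subset) (use t1T in auto)
    ultimately obtain s where "0 \<le> s" "s \<le> t1" "\<phi> s = L"
      using IVT'[of \<phi> 0 L t1] start above by force
    then show False using before[of s] above t1T by (cases "s = t1") auto
  qed
  then have "\<forall>s\<in>{0..t1}. \<phi> s \<le> L"
    using before t1T by (auto simp: le_less)
  then have "\<phi> t1 < L" by (rule improve[OF t1T])
  then show False using \<open>L \<le> \<phi> t1\<close> by simp
qed

lemma ode_solution_on_subset:
  "ode_solution_on f x J \<Longrightarrow> I \<subseteq> J \<Longrightarrow> ode_solution_on f x I"
  unfolding ode_solution_on_def by (meson has_vector_derivative_within_subset subsetD)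

lemma ode_solution_on_continuous_on:
  "ode_solution_on f x J \<Longrightarrow> continuous_on J x"
  unfolding ode_solution_on_def continuous_on_eq_continuous_within
  by (blast intro: has_vector_derivative_continuous)

lemma has_integral_exp_mult:
  fixes K c :: real
  assumes "K \<noteq> 0" "0 \<le> c"
  shows "((\<lambda>s. exp (K * s)) has_integral (exp (K * c) - 1) / K) {0..c}"
proof -
  have "((\<lambda>s. exp (K * s)) has_integral exp (K * c) / K - exp (K * 0) / K) {0..c}"
  proof (rule fundamental_theorem_of_calculus[OF assms(2)])
    fix s assume "s \<in> {0..c}"
    have "((\<lambda>s. exp (K * s) / K) has_real_derivative exp (K * s)) (at s within {0..c})"
      using assms(1) by (auto intro!: derivative_eq_intros)
    then show "((\<lambda>s. exp (K * s) / K) has_vector_derivative exp (K * s)) (at s within {0..c})"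
      by (simp add: has_real_derivative_iff_has_vector_derivative)
  qed
  then show ?thesis by (simp add: diff_divide_distrib)
qed

lemma ode_solution_on_integral_equation:
  fixes g :: "'a::banach \<Rightarrow> 'a"
  assumes cont: "continuous_on {0..T} (\<lambda>s. g (x s))"
    and eq: "\<And>t. t \<in> {0..T} \<Longrightarrow> x t = x0 + integral {0..t} (\<lambda>s. g (x s))"
  shows "ode_solution_on g x {0..T}"
  unfolding ode_solution_on_def
proof
  fix t assume t: "t \<in> {0..T}"
  have "((\<lambda>u. x0 + integral {0..u} (\<lambda>s. g (x s))) has_vector_derivative g (x t)) (at t within {0..T})"
    using has_vector_derivative_add[OF has_vector_derivative_const integral_has_vector_derivative[OF cont t]]
    by simp
  then show "(x has_vector_derivative g (x t)) (at t within {0..T})"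
    by (rule has_vector_derivative_transform_within[of _ _ _ _ 1]) (use t eq in auto)
qed

text \<open>Picard iteration in Bielecki form: a solution is sought as \<open>x t = exp (K t) z t\<close> with \<open>z\<close> a
  bounded continuous function (constant outside \<open>[0, T]\<close>); for \<open>K = 2 L + 1\<close> the integral operator
  is a \<open>1/2\<close>-contraction in \<open>z\<close>, whatever the length of the time interval.\<close>

lemma bielecki_contraction:
  fixes g :: "'a::banach \<Rightarrow> 'a" and z w :: "real \<Rightarrow> 'a"
  assumes lip: "L-lipschitz_on UNIV g" and K: "K = 2 * L + 1" and c: "0 \<le> c"
    and cont: "continuous_on {0..c} z" "continuous_on {0..c} w"
    and D: "\<And>s. s \<in> {0..c} \<Longrightarrow> dist (z s) (w s) \<le> D"
  shows "exp (- (K * c)) * norm (integral {0..c} (\<lambda>s. g (exp (K * s) *\<^sub>R z s))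
            - integral {0..c} (\<lambda>s. g (exp (K * s) *\<^sub>R w s))) \<le> D / 2"
proof -
  have L: "0 \<le> L" using lipschitz_on_nonneg[OF lip] .
  have K0: "0 < K" using L K by simp
  have D0: "0 \<le> D" using D[of c] c by (meson atLeastAtMost_iff order_refl zero_le_dist order_trans)
  have gc: "continuous_on UNIV g" using lipschitz_on_continuous_on[OF lip] .
  have int: "(\<lambda>s. g (exp (K * s) *\<^sub>R u s)) integrable_on {0..c}" if "continuous_on {0..c} u" for u
    by (intro integrable_continuous_interval continuous_on_compose2[OF gc] continuous_intros that) auto
  have "norm (integral {0..c} (\<lambda>s. g (exp (K * s) *\<^sub>R z s) - g (exp (K * s) *\<^sub>R w s)))
        \<le> integral {0..c} (\<lambda>s. L * D * exp (K * s))"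
  proof (rule integral_norm_bound_integral)
    show "(\<lambda>s. g (exp (K * s) *\<^sub>R z s) - g (exp (K * s) *\<^sub>R w s)) integrable_on {0..c}"
      by (intro integrable_diff int cont)
    show "(\<lambda>s. L * D * exp (K * s)) integrable_on {0..c}"
      by (intro integrable_continuous_interval continuous_intros)
    fix s assume s: "s \<in> {0..c}"
    have "norm (g (exp (K * s) *\<^sub>R z s) - g (exp (K * s) *\<^sub>R w s))
          \<le> L * norm (exp (K * s) *\<^sub>R z s - exp (K * s) *\<^sub>R w s)"
      using lipschitz_on_normD[OF lip] by simp
    also have "\<dots> = L * exp (K * s) * dist (z s) (w s)"
      by (simp add: dist_norm flip: scaleR_diff_right)
    also have "\<dots> \<le> L * exp (K * s) * D"
      using D[OF s] L by (simp add: mult_left_mono)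
    finally show "norm (g (exp (K * s) *\<^sub>R z s) - g (exp (K * s) *\<^sub>R w s)) \<le> L * D * exp (K * s)"
      by (simp add: mult_ac)
  qed
  also have "\<dots> = L * D * ((exp (K * c) - 1) / K)"
    by (rule integral_unique)
      (use has_integral_mult_right[OF has_integral_exp_mult[OF _ c], of K "L * D"] K0 in simp)
  finally have I: "norm (integral {0..c} (\<lambda>s. g (exp (K * s) *\<^sub>R z s))
            - integral {0..c} (\<lambda>s. g (exp (K * s) *\<^sub>R w s))) \<le> L * D * ((exp (K * c) - 1) / K)"
    by (simp add: integral_diff[OF int int] cont)
  have "exp (- (K * c)) * norm (integral {0..c} (\<lambda>s. g (exp (K * s) *\<^sub>R z s))
            - integral {0..c} (\<lambda>s. g (exp (K * s) *\<^sub>R w s)))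
        \<le> exp (- (K * c)) * (L * D * ((exp (K * c) - 1) / K))"
    using I by (rule mult_left_mono) simp
  also have "\<dots> = L * D * (1 - exp (- (K * c))) / K"
    by (simp add: field_simps exp_minus_inverse)
  also have "\<dots> \<le> L * D / K"
    using K0 L D0 by (intro divide_right_mono mult_left_le) auto
  also have "\<dots> \<le> D / 2"
    using K0 D0 by (simp add: pos_divide_le_eq K algebra_simps)
  finally show ?thesis .
qed

lemma lipschitz_ode_solution_exists:
  fixes g :: "'a::banach \<Rightarrow> 'a"
  assumes lip: "L-lipschitz_on UNIV g" and T: "0 \<le> T"
  obtains x where "x 0 = x0" "ode_solution_on g x {0..T}"
proof -
  define K where "K = 2 * L + 1"
  have gc: "continuous_on UNIV g" using lipschitz_on_continuous_on[OF lip] .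
  define F where "F z t = exp (- (K * t)) *\<^sub>R (x0 + integral {0..t} (\<lambda>s. g (exp (K * s) *\<^sub>R apply_bcontfun z s)))"
    for z :: "(real, 'a) bcontfun" and t
  have Fcont: "continuous_on {0..T} (F z)" for z
    unfolding F_def
    by (intro continuous_intros indefinite_integral_continuous_1 integrable_continuous_interval
        continuous_on_compose2[OF gc] continuous_on_apply_bcontfun) auto
  have "\<exists>w. \<forall>t. apply_bcontfun w t = F z (clamp 0 T t)" for z
    using continuous_on_cbox_bcontfunE[of 0 T "F z"] Fcont[of z] unfolding cbox_interval by metis
  then obtain Q where Q: "\<And>z t. apply_bcontfun (Q z) t = F z (clamp 0 T t)"
    by metis
  have clamp: "clamp 0 T t \<in> {0..T}" "t \<in> {0..T} \<Longrightarrow> clamp 0 T t = t" for t :: real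
    using clamp_in_interval[of 0 T t] clamp_cancel_cbox[of t 0 T] T by (auto simp: cbox_interval)
  have "dist (Q z) (Q w) \<le> 1/2 * dist z w" for z w
  proof (rule dist_bound)
    fix t
    define c where "c = clamp 0 T t"
    have c: "0 \<le> c" using clamp(1)[of t] by (simp add: c_def)
    have "dist (Q z t) (Q w t) = exp (- (K * c)) * norm (integral {0..c} (\<lambda>s. g (exp (K * s) *\<^sub>R z s))
            - integral {0..c} (\<lambda>s. g (exp (K * s) *\<^sub>R w s)))"
      by (simp add: Q F_def c_def[symmetric] dist_norm flip: scaleR_diff_right)
    also have "\<dots> \<le> dist z w / 2"
      by (rule bielecki_contraction[OF lip K_def c continuous_on_apply_bcontfun continuous_on_apply_bcontfun
            dist_bounded])
    finally show "dist (Q z t) (Q w t) \<le> 1/2 * dist z w" by simp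
  qed
  then obtain z where z: "Q z = z"
    using banach_fix_type[of "1/2" Q] by auto
  define x where "x t = exp (K * t) *\<^sub>R apply_bcontfun z t" for t
  have integral_equation: "x t = x0 + integral {0..t} (\<lambda>s. g (x s))" if "t \<in> {0..T}" for t
    using Q[of z t] clamp(2)[OF that] by (simp add: z x_def F_def exp_minus_inverse)
  have "continuous_on {0..T} (\<lambda>s. g (x s))"
    unfolding x_def by (intro continuous_on_compose2[OF gc] continuous_intros continuous_on_apply_bcontfun) auto
  then have "ode_solution_on g x {0..T}"
    using integral_equation by (rule ode_solution_on_integral_equation)
  moreover have "x 0 = x0" using integral_equation[of 0] T by simp
  ultimately show ?thesis using that by blast
qed

section \<open>Lyapunov and Chetaev functions\<close>

locale quadratic_lyapunov_function =
  fixes f :: "'a::real_normed_vector \<Rightarrow> 'a" and e :: 'a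
    and V V' :: "'a \<Rightarrow> real" and m M r c :: real
  assumes m_pos: "0 < m" and m_le_M: "m \<le> M" and r_pos: "0 < r" and c_pos: "0 < c"
    and lower_bound: "\<And>y. m * (dist y e)\<^sup>2 \<le> V y"
    and upper_bound: "\<And>y. V y \<le> M * (dist y e)\<^sup>2"
    and decay: "\<And>y. dist y e \<le> r \<Longrightarrow> V' y \<le> - c * V y"
    and derivative_along: "\<And>x t J. (x has_vector_derivative f (x t)) (at t within J) \<Longrightarrow>
           ((\<lambda>t. V (x t)) has_real_derivative V' (x t)) (at t within J)"
begin

lemma M_pos: "0 < M"
  using m_pos m_le_M by linarith

lemma nonneg: "0 \<le> V y"
proof -
  have "0 \<le> m * (dist y e)\<^sup>2" using m_pos by simp
  then show ?thesis using lower_bound[of y] by linarith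
qed

lemma dist_le_if_le:
  assumes "V y \<le> m * \<epsilon>\<^sup>2" "0 \<le> \<epsilon>"
  shows "dist y e \<le> \<epsilon>"
proof -
  have "m * (dist y e)\<^sup>2 \<le> m * \<epsilon>\<^sup>2" using lower_bound[of y] assms(1) by linarith
  then show ?thesis using m_pos assms(2) by (auto intro!: power2_le_imp_le[of "dist y e"])
qed

lemma dist_less_if_less:
  assumes "V y < m * \<epsilon>\<^sup>2" "0 \<le> \<epsilon>"
  shows "dist y e < \<epsilon>"
proof -
  have "m * (dist y e)\<^sup>2 < m * \<epsilon>\<^sup>2" using lower_bound[of y] assms(1) by linarith
  then show ?thesis using m_pos assms(2) by (auto intro!: power2_less_imp_less[of "dist y e"])
qed

lemma derivative_along_solution:
  assumes "ode_solution_on f x J" "t \<in> J"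
  shows "((\<lambda>t. V (x t)) has_real_derivative V' (x t)) (at t within J)"
  using assms by (auto simp: ode_solution_on_def intro: derivative_along)

lemma solution_stays_near:
  assumes \<epsilon>: "0 < \<epsilon>" "\<epsilon> \<le> r" and sol: "ode_solution_on f x {0..T}"
    and start: "dist (x 0) e < m * \<epsilon> / M"
  shows "\<forall>t\<in>{0..T}. dist (x t) e < \<epsilon>"
proof -
  have "V (x 0) \<le> M * (dist (x 0) e)\<^sup>2" by (rule upper_bound)
  also have "\<dots> < M * (m * \<epsilon> / M)\<^sup>2"
    using start M_pos by (intro mult_strict_left_mono power_strict_mono) auto
  also have "\<dots> = m * (m / M) * \<epsilon>\<^sup>2" using M_pos by (simp add: power2_eq_square)
  also have "\<dots> \<le> m * 1 * \<epsilon>\<^sup>2" using m_le_M M_pos m_pos by (intro mult_right_mono mult_left_mono) auto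
  finally have V0: "V (x 0) < m * \<epsilon>\<^sup>2" by simp
  have "\<forall>t\<in>{0..T}. V (x t) < m * \<epsilon>\<^sup>2"
  proof (rule continuity_bootstrap[where \<phi> = "\<lambda>t. V (x t)", OF _ V0])
    show "continuous_on {0..T} (\<lambda>t. V (x t))"
      unfolding continuous_on_eq_continuous_within
      using derivative_along_solution[OF sol] by (blast intro: DERIV_continuous)
    fix t assume t: "t \<in> {0..T}" and below: "\<forall>s\<in>{0..t}. V (x s) \<le> m * \<epsilon>\<^sup>2"
    have "- V (x 0) \<le> - V (x t)"
    proof (rule has_real_derivative_nonneg_imp_le[where h = "\<lambda>s. - V (x s)" and h' = "\<lambda>s. - V' (x s)"])
      fix s assume s: "s \<in> {0..t}"
      have "ode_solution_on f x {0..t}" using sol t by (auto elim: ode_solution_on_subset)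
      then show "((\<lambda>s. - V (x s)) has_real_derivative - V' (x s)) (at s within {0..t})"
        using s by (auto intro!: derivative_eq_intros derivative_along_solution)
      have "dist (x s) e \<le> r"
        using dist_le_if_le[of "x s" \<epsilon>] below s \<epsilon> by auto
      then show "0 \<le> - V' (x s)"
        using decay[of "x s"] mult_nonneg_nonneg[OF less_imp_le[OF c_pos] nonneg[of "x s"]] by linarith
    qed (use t in auto)
    then show "V (x t) < m * \<epsilon>\<^sup>2" using V0 by simp
  qed
  then show ?thesis using dist_less_if_less \<epsilon>(1) by (simp add: less_imp_le)
qed

lemma lyapunov_stable: "lyapunov_stable f e"
  unfolding lyapunov_stable_def
proof (intro allI impI)
  fix \<epsilon> :: real assume "0 < \<epsilon>"
  then have \<epsilon>: "0 < min \<epsilon> r" "min \<epsilon> r \<le> r" using r_pos by auto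
  show "\<exists>\<delta>>0. \<forall>x T. 0 \<le> T \<and> ode_solution_on f x {0..T} \<and> dist (x 0) e < \<delta>
          \<longrightarrow> (\<forall>t\<in>{0..T}. dist (x t) e < \<epsilon>)"
  proof (intro exI conjI allI impI)
    show "0 < m * min \<epsilon> r / M" using m_pos M_pos \<epsilon>(1) by simp
    fix x T assume "0 \<le> T \<and> ode_solution_on f x {0..T} \<and> dist (x 0) e < m * min \<epsilon> r / M"
    then have "\<forall>t\<in>{0..T}. dist (x t) e < min \<epsilon> r" using solution_stays_near[OF \<epsilon>] by blast
    then show "\<forall>t\<in>{0..T}. dist (x t) e < \<epsilon>" by simp
  qed
qed

lemma exponential_decay:
  assumes sol: "ode_solution_on f x {0..}" and start: "dist (x 0) e < m * r / M" and t: "0 \<le> t"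
  shows "V (x t) \<le> V (x 0) * exp (- (c * t))"
proof -
  have near: "dist (x s) e \<le> r" if "s \<in> {0..t}" for s
    using solution_stays_near[OF r_pos order_refl ode_solution_on_subset[OF sol] start, of t] that
    by fastforce
  have "- (V (x 0) * exp (c * 0)) \<le> - (V (x t) * exp (c * t))"
  proof (rule has_real_derivative_nonneg_imp_le[OF t,
        where h = "\<lambda>s. - (V (x s) * exp (c * s))" and h' = "\<lambda>s. - (V' (x s) * exp (c * s) + V (x s) * (exp (c * s) * c))"])
    fix s assume s: "s \<in> {0..t}"
    have "ode_solution_on f x {0..t}" using sol by (rule ode_solution_on_subset) auto
    then show "((\<lambda>s. - (V (x s) * exp (c * s))) has_real_derivative
        - (V' (x s) * exp (c * s) + V (x s) * (exp (c * s) * c))) (at s within {0..t})"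
      using s by (auto intro!: derivative_eq_intros derivative_along_solution)
    have "(V' (x s) + c * V (x s)) * exp (c * s) \<le> 0"
      using decay[OF near[OF s]] by (simp add: mult_nonpos_nonneg)
    then show "0 \<le> - (V' (x s) * exp (c * s) + V (x s) * (exp (c * s) * c))"
      by (simp add: algebra_simps)
  qed
  then have "V (x t) * exp (c * t) * exp (- (c * t)) \<le> V (x 0) * exp (- (c * t))"
    by (intro mult_right_mono) auto
  then show ?thesis by (simp add: exp_minus_inverse mult.assoc)
qed

lemma locally_attractive: "locally_attractive f e"
  unfolding locally_attractive_def
proof (intro exI conjI allI impI)
  show "0 < m * r / M" using m_pos r_pos M_pos by simp
  fix x assume "ode_solution_on f x {0..} \<and> dist (x 0) e < m * r / M"
  then have bound: "V (x t) \<le> V (x 0) * exp (- (c * t))" if "0 \<le> t" for t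
    using exponential_decay that by blast
  have decay: "\<forall>\<^sub>F t in at_top. V (x t) \<le> V (x 0) * exp (- (c * t))"
    using eventually_ge_at_top[of "0::real"] by (rule eventually_mono) (rule bound)
  have "((\<lambda>t. V (x 0) * exp (- (c * t))) \<longlongrightarrow> 0) at_top"
    using c_pos by real_asymp
  show "(x \<longlongrightarrow> e) at_top"
  proof (rule tendstoI)
    fix \<epsilon> :: real assume "0 < \<epsilon>"
    then have "\<forall>\<^sub>F t in at_top. V (x 0) * exp (- (c * t)) < m * \<epsilon>\<^sup>2"
      using order_tendstoD(2)[OF \<open>(_ \<longlongrightarrow> 0) at_top\<close>] m_pos by simp
    with decay show "\<forall>\<^sub>F t in at_top. dist (x t) e < \<epsilon>"
    proof eventually_elim
      case (elim t)
      then show ?case using dist_less_if_less[of "x t" \<epsilon>] \<open>0 < \<epsilon>\<close> by simp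
    qed
  qed
qed

lemma locally_asymptotically_stable: "locally_asymptotically_stable f e"
  unfolding locally_asymptotically_stable_def using lyapunov_stable locally_attractive ..

end

locale chetaev_function =
  fixes f :: "'a::euclidean_space \<Rightarrow> 'a" and e :: 'a
    and W W' :: "'a \<Rightarrow> real" and r \<kappa> B :: real
  assumes r_pos: "0 < r" and \<kappa>_pos: "0 < \<kappa>"
    and growth: "\<And>y. dist y e \<le> r \<Longrightarrow> 0 \<le> W' y \<and> \<kappa> * W y \<le> W' y"
    and bounded_above: "\<And>y. dist y e \<le> r \<Longrightarrow> W y \<le> B"
    and positive_near: "\<And>\<delta>. 0 < \<delta> \<Longrightarrow> \<exists>p. dist p e < \<delta> \<and> 0 < W p"
    and derivative_along: "\<And>x t J. (x has_vector_derivative f (x t)) (at t within J) \<Longrightarrow>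
           ((\<lambda>t. W (x t)) has_real_derivative W' (x t)) (at t within J)"
    and lipschitz_on_bounded: "\<And>U. bounded U \<Longrightarrow> \<exists>L. L-lipschitz_on U f"
begin

lemma linear_growth:
  assumes sol: "ode_solution_on f y {0..T}" and T: "0 \<le> T"
    and near: "\<And>t. t \<in> {0..T} \<Longrightarrow> dist (y t) e \<le> r"
  shows "W (y 0) + \<kappa> * W (y 0) * T \<le> W (y T)"
proof -
  have deriv: "((\<lambda>s. W (y s)) has_real_derivative W' (y s)) (at s within {0..t})"
    if "t \<in> {0..T}" "s \<in> {0..t}" for s t
    using ode_solution_on_subset[OF sol, of "{0..t}"] that
    by (auto simp: ode_solution_on_def intro: derivative_along)
  have increasing: "W (y 0) \<le> W (y t)" if t: "t \<in> {0..T}" for t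
  proof (rule has_real_derivative_nonneg_imp_le[where h = "\<lambda>s. W (y s)" and h' = "\<lambda>s. W' (y s)"])
    fix s assume "s \<in> {0..t}"
    then show "((\<lambda>s. W (y s)) has_real_derivative W' (y s)) (at s within {0..t})"
      and "0 \<le> W' (y s)"
      using deriv[OF t] growth near t by auto
  qed (use t in auto)
  have "W (y 0) - \<kappa> * W (y 0) * 0 \<le> W (y T) - \<kappa> * W (y 0) * T"
  proof (rule has_real_derivative_nonneg_imp_le[OF T, where h = "\<lambda>s. W (y s) - \<kappa> * W (y 0) * s"
        and h' = "\<lambda>s. W' (y s) - \<kappa> * W (y 0)"])
    fix s assume s: "s \<in> {0..T}"
    show "((\<lambda>s. W (y s) - \<kappa> * W (y 0) * s) has_real_derivative W' (y s) - \<kappa> * W (y 0)) (at s within {0..T})"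
      using deriv[OF _ s] T by (auto intro!: derivative_eq_intros)
    have "\<kappa> * W (y 0) \<le> \<kappa> * W (y s)" using increasing[OF s] \<kappa>_pos by simp
    then show "0 \<le> W' (y s) - \<kappa> * W (y 0)" using growth[OF near[OF s]] by linarith
  qed
  then show ?thesis by simp
qed

text \<open>Only globally Lipschitz fields are covered by \<open>lipschitz_ode_solution_exists\<close>,
  so we solve \<open>f\<close> composed with the nearest-point projection onto the closed ball, which agrees
  with \<open>f\<close> as long as the solution stays in the ball.\<close>

lemma truncated_solution_exists:
  assumes "0 \<le> T"
  obtains y where "y 0 = p" "continuous_on {0..T} y"
    "\<And>t. t \<in> {0..T} \<Longrightarrow> \<forall>s\<in>{0..t}. dist (y s) e \<le> r \<Longrightarrow> ode_solution_on f y {0..t}"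
proof -
  define P where "P = closest_point (cball e r)"
  have P_in: "P v \<in> cball e r" for v
    unfolding P_def using r_pos by (intro closest_point_in_set) auto
  have P_id: "P v = v" if "dist v e \<le> r" for v
    unfolding P_def using that by (intro closest_point_self) (simp add: dist_commute)
  have "1-lipschitz_on UNIV P"
    unfolding P_def using r_pos by (intro lipschitz_onI) (auto intro: closest_point_lipschitz)
  moreover obtain L where "L-lipschitz_on (range P) f"
    using lipschitz_on_bounded bounded_subset[OF bounded_cball, of "range P"] P_in by blast
  ultimately have "(L * 1)-lipschitz_on UNIV (\<lambda>v. f (P v))" by (rule lipschitz_on_compose2)
  then obtain y where y0: "y 0 = p" and sol: "ode_solution_on (\<lambda>v. f (P v)) y {0..T}"
    using lipschitz_ode_solution_exists assms by blast
  show ?thesis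
  proof (rule that[OF y0 ode_solution_on_continuous_on[OF sol]])
    fix t assume t: "t \<in> {0..T}" and near: "\<forall>s\<in>{0..t}. dist (y s) e \<le> r"
    have "ode_solution_on (\<lambda>v. f (P v)) y {0..t}"
      by (rule ode_solution_on_subset[OF sol]) (use t in auto)
    then show "ode_solution_on f y {0..t}" using near by (simp add: ode_solution_on_def P_id)
  qed
qed

lemma not_lyapunov_stable: "\<not> lyapunov_stable f e"
proof
  assume "lyapunov_stable f e"
  moreover have "0 < r / 2" using r_pos by simp
  ultimately have "\<exists>\<delta>>0. \<forall>x T. 0 \<le> T \<and> ode_solution_on f x {0..T} \<and> dist (x 0) e < \<delta>
      \<longrightarrow> (\<forall>t\<in>{0..T}. dist (x t) e < r / 2)"
    unfolding lyapunov_stable_def by blast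
  then obtain \<delta> where \<delta>: "0 < \<delta>" and stable: "\<And>x T. 0 \<le> T \<Longrightarrow> ode_solution_on f x {0..T} \<Longrightarrow>
      dist (x 0) e < \<delta> \<Longrightarrow> \<forall>t\<in>{0..T}. dist (x t) e < r / 2"
    by blast
  obtain p where p: "dist p e < min \<delta> (r / 2)" "0 < W p"
    using positive_near[of "min \<delta> (r / 2)"] \<delta> r_pos by auto
  \<comment> \<open>long enough for the linear growth of \<open>W\<close> to exceed its bound \<open>B\<close> on the ball\<close>
  define T where "T = (B - W p) / (\<kappa> * W p) + 1"
  have "dist p e \<le> r" using p(1) r_pos by simp
  then have "W p \<le> B" by (rule bounded_above)
  then have T: "0 \<le> T" using p(2) \<kappa>_pos by (simp add: T_def)
  obtain y where y0: "y 0 = p" and cont: "continuous_on {0..T} y" and sol: "\<And>t. t \<in> {0..T} \<Longrightarrow>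
      \<forall>s\<in>{0..t}. dist (y s) e \<le> r \<Longrightarrow> ode_solution_on f y {0..t}"
    using truncated_solution_exists[OF T] by blast
  have stays: "\<forall>t\<in>{0..T}. dist (y t) e < r / 2"
  proof (rule continuity_bootstrap[where \<phi> = "\<lambda>t. dist (y t) e"])
    show "continuous_on {0..T} (\<lambda>t. dist (y t) e)"
      by (intro continuous_intros cont)
    show "dist (y 0) e < r / 2" using p(1) y0 by simp
    fix t assume t: "t \<in> {0..T}" and below: "\<forall>s\<in>{0..t}. dist (y s) e \<le> r / 2"
    then have "\<forall>s\<in>{0..t}. dist (y s) e \<le> r" using r_pos by auto
    then have "ode_solution_on f y {0..t}" by (rule sol[OF t])
    then show "dist (y t) e < r / 2" using stable[of t y] t p(1) y0 by auto
  qed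
  then have near: "dist (y t) e \<le> r" if "t \<in> {0..T}" for t
    using that r_pos by fastforce
  have "W p + \<kappa> * W p * T \<le> W (y T)"
    using linear_growth[OF sol[OF _ ] T near] y0 T near by auto
  also have "\<dots> \<le> B" using bounded_above near T by simp
  finally have "W p + \<kappa> * W p * T \<le> B" .
  moreover have "\<kappa> * W p * T = B - W p + \<kappa> * W p"
    using p(2) \<kappa>_pos by (simp add: T_def field_simps)
  moreover have "0 < \<kappa> * W p" using p(2) \<kappa>_pos by simp
  ultimately show False by linarith
qed

end

lemma exhaust_6:
  fixes x :: 6
  shows "x = 1 \<or> x = 2 \<or> x = 3 \<or> x = 4 \<or> x = 5 \<or> x = 6"
proof (induct x)
  case (of_int z)
  then have "z = 0 \<or> z = 1 \<or> z = 2 \<or> z = 3 \<or> z = 4 \<or> z = 5" by fastforce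
  then show ?case by auto
qed

lemma UNIV_6: "UNIV = {1, 2, 3, 4, 5, 6::6}"
  using exhaust_6 by auto

lemma sum_UNIV_6: "sum f (UNIV::6 set) = f 1 + f 2 + f 3 + f 4 + f 5 + f 6"
  unfolding UNIV_6 by (simp add: ac_simps)

lemma norm_vec6_squared:
  "(norm (x::real^6))\<^sup>2 = (x$1)\<^sup>2 + (x$2)\<^sup>2 + (x$3)\<^sup>2 + (x$4)\<^sup>2 + (x$5)\<^sup>2 + (x$6)\<^sup>2"
  unfolding norm_vec_def L2_set_def by (simp add: sum_UNIV_6 sum_nonneg)

lemma lipschitz_on_vec_nth: "1-lipschitz_on U (\<lambda>x. x $ i)"
  by (rule lipschitz_onI) (simp_all add: dist_vec_nth_le)

lemma lipschitz_on_mult_real: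
  fixes f g :: "'a::metric_space \<Rightarrow> real"
  assumes f: "C-lipschitz_on U f" and g: "D-lipschitz_on U g" and K: "0 \<le> K"
    and bounded: "\<And>x. x \<in> U \<Longrightarrow> \<bar>f x\<bar> \<le> K" "\<And>x. x \<in> U \<Longrightarrow> \<bar>g x\<bar> \<le> K"
  shows "(K * (C + D))-lipschitz_on U (\<lambda>x. f x * g x)"
proof (rule lipschitz_onI)
  show "0 \<le> K * (C + D)" using K lipschitz_on_nonneg[OF f] lipschitz_on_nonneg[OF g] by simp
  fix x y assume xy: "x \<in> U" "y \<in> U"
  have "dist (f x * g x) (f y * g y) = \<bar>f x * (g x - g y) + g y * (f x - f y)\<bar>"
    by (simp add: dist_real_def algebra_simps)
  also have "\<dots> \<le> \<bar>f x\<bar> * \<bar>g x - g y\<bar> + \<bar>g y\<bar> * \<bar>f x - f y\<bar>"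
    by (metis abs_mult abs_triangle_ineq)
  also have "\<dots> \<le> K * (D * dist x y) + K * (C * dist x y)"
    using lipschitz_onD[OF f xy] lipschitz_onD[OF g xy] bounded xy K
    by (intro add_mono mult_mono) (auto simp: dist_real_def)
  finally show "dist (f x * g x) (f y * g y) \<le> K * (C + D) * dist x y"
    by (simp add: algebra_simps)
qed

lemma lipschitz_on_vec_lambda:
  fixes f :: "'a::metric_space \<Rightarrow> real^'n"
  assumes "\<And>i. (L i)-lipschitz_on U (\<lambda>x. f x $ i)"
  shows "(\<Sum>i\<in>UNIV. L i)-lipschitz_on U f"
proof (rule lipschitz_onI)
  show "0 \<le> (\<Sum>i\<in>UNIV. L i)" using lipschitz_on_nonneg[OF assms] by (simp add: sum_nonneg)
  fix x y assume xy: "x \<in> U" "y \<in> U"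
  have "dist (f x) (f y) \<le> (\<Sum>i\<in>UNIV. \<bar>(f x - f y) $ i\<bar>)"
    unfolding dist_norm by (rule norm_le_l1_cart)
  also have "\<dots> \<le> (\<Sum>i\<in>UNIV. L i * dist x y)"
    using lipschitz_onD[OF assms xy] by (intro sum_mono) (simp add: dist_real_def)
  finally show "dist (f x) (f y) \<le> (\<Sum>i\<in>UNIV. L i) * dist x y"
    by (simp add: sum_distrib_right)
qed

lemma sveitrs_nth:
  "sveitrs \<Lambda> \<beta> \<gamma> \<mu> \<pi> \<eta> \<theta> \<delta> \<tau> \<alpha> \<omega> x $ 1 = \<Lambda> + \<eta> * x$6 + \<theta> * x$2 - (\<beta> * x$4 + \<pi> + \<mu>) * x$1"
  "sveitrs \<Lambda> \<beta> \<gamma> \<mu> \<pi> \<eta> \<theta> \<delta> \<tau> \<alpha> \<omega> x $ 2 = \<pi> * x$1 - (\<theta> + \<mu>) * x$2"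
  "sveitrs \<Lambda> \<beta> \<gamma> \<mu> \<pi> \<eta> \<theta> \<delta> \<tau> \<alpha> \<omega> x $ 3 = \<beta> * x$1 * x$4 - (\<gamma> + \<mu>) * x$3"
  "sveitrs \<Lambda> \<beta> \<gamma> \<mu> \<pi> \<eta> \<theta> \<delta> \<tau> \<alpha> \<omega> x $ 4 = \<gamma> * x$3 - (\<delta> + \<tau> + \<mu>) * x$4"
  "sveitrs \<Lambda> \<beta> \<gamma> \<mu> \<pi> \<eta> \<theta> \<delta> \<tau> \<alpha> \<omega> x $ 5 = \<delta> * x$4 - (\<alpha> + \<omega> + \<mu>) * x$5"
  "sveitrs \<Lambda> \<beta> \<gamma> \<mu> \<pi> \<eta> \<theta> \<delta> \<tau> \<alpha> \<omega> x $ 6 = \<alpha> * x$5 - (\<eta> + \<mu>) * x$6"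
  by (simp_all add: sveitrs_def Let_def)

lemma sveitrs_lipschitz_on_bounded:
  assumes "bounded U"
  shows "\<exists>L. L-lipschitz_on U (sveitrs \<Lambda> \<beta> \<gamma> \<mu> \<pi> \<eta> \<theta> \<delta> \<tau> \<alpha> \<omega>)"
proof -
  let ?f = "sveitrs \<Lambda> \<beta> \<gamma> \<mu> \<pi> \<eta> \<theta> \<delta> \<tau> \<alpha> \<omega>"
  obtain K where K: "0 < K" "\<And>x. x \<in> U \<Longrightarrow> norm x \<le> K"
    using assms by (auto simp: bounded_pos)
  have prod: "(K * (1 + 1))-lipschitz_on U (\<lambda>x. x $ i * x $ j)" for i j
    using K by (intro lipschitz_on_mult_real lipschitz_on_vec_nth)
      (auto intro: order_trans[OF component_le_norm_cart])
  have "\<exists>L. L-lipschitz_on U (\<lambda>x. ?f x $ i)" for i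
  proof -
    consider "i = 1" | "i = 2" | "i = 3" | "i = 4" | "i = 5" | "i = 6" using exhaust_6 by blast
    then show ?thesis
    proof cases
      case 1
      have eq: "(\<lambda>x. ?f x $ i) = (\<lambda>x. \<Lambda> + \<eta> * x$6 + \<theta> * x$2 - \<beta> * (x$4 * x$1) - (\<pi> + \<mu>) * x$1)"
        by (simp add: 1 sveitrs_nth algebra_simps)
      show ?thesis unfolding eq by (rule exI, (rule lipschitz_on_add lipschitz_on_diff lipschitz_on_constant
          lipschitz_on_cmult_real lipschitz_on_vec_nth prod)+)
    next
      case 3
      have eq: "(\<lambda>x. ?f x $ i) = (\<lambda>x. \<beta> * (x$1 * x$4) - (\<gamma> + \<mu>) * x$3)"
        by (simp add: 3 sveitrs_nth algebra_simps)
      show ?thesis unfolding eq by (rule exI, (rule lipschitz_on_add lipschitz_on_diff lipschitz_on_constant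
          lipschitz_on_cmult_real lipschitz_on_vec_nth prod)+)
    qed (simp_all add: sveitrs_nth,
        (rule exI, (rule lipschitz_on_diff lipschitz_on_cmult_real lipschitz_on_vec_nth)+)+)
  qed
  then obtain L where "\<And>i. (L i)-lipschitz_on U (\<lambda>x. ?f x $ i)" by metis
  then show ?thesis by (blast intro: lipschitz_on_vec_lambda)
qed

section \<open>Quadratic estimates for the linearised model\<close>

lemma mult_le_weighted_squares:
  fixes x y p q :: real
  assumes "0 < p" "1 \<le> 4 * p * q"
  shows "x * y \<le> p * x\<^sup>2 + q * y\<^sup>2"
proof -
  have square: "p * x\<^sup>2 + q * y\<^sup>2 - x * y = p * (x - y / (2 * p))\<^sup>2 + (q - 1 / (4 * p)) * y\<^sup>2"
    using assms(1) by (simp add: field_simps power2_eq_square)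
  have "0 \<le> q - 1 / (4 * p)" using assms by (simp add: field_simps)
  then have "0 \<le> p * (x - y / (2 * p))\<^sup>2 + (q - 1 / (4 * p)) * y\<^sup>2"
    using assms(1) by (intro add_nonneg_nonneg mult_nonneg_nonneg) auto
  with square show ?thesis by linarith
qed

lemma abs_mult_le_half_squares: "\<bar>x * y\<bar> \<le> (x\<^sup>2 + y\<^sup>2) / 2" for x y :: real
  using sum_squares_bound[of "\<bar>x\<bar>" "\<bar>y\<bar>"] by (simp add: abs_mult)

lemma linear_decay_estimate:
  fixes p d x y :: real
  assumes "0 < d"
  shows "y * (p * x - d * y) \<le> - (d / 2) * y\<^sup>2 + (p\<^sup>2 / (2 * d)) * x\<^sup>2"
proof -
  have "y * (p * x) \<le> (d / 2) * y\<^sup>2 + (1 / (2 * d)) * (p * x)\<^sup>2"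
    using assms by (intro mult_le_weighted_squares) auto
  then show ?thesis by (simp add: algebra_simps power2_eq_square)
qed

text \<open>The exposed and infectious classes at the disease-free equilibrium:
  \<open>E' = b I - a E + \<beta> s I\<close>, \<open>I' = \<gamma> E - c I\<close> with \<open>s = S - S\<^sub>0\<close>, \<open>b = \<beta> S\<^sub>0\<close>, \<open>a = \<gamma> + \<mu>\<close>,
  \<open>c = \<delta> + \<tau> + \<mu>\<close>; the threshold \<open>b \<gamma> = a c\<close> is \<open>Rv = 1\<close>. Below it, any \<open>t\<close> strictly between
  \<open>\<gamma> / c\<close> and \<open>a / b\<close> splits the cross term \<open>2 b \<gamma> E I\<close> into parts dominated by \<open>a \<gamma> E\<^sup>2\<close> and
  \<open>b c I\<^sup>2\<close>.\<close>

lemma infected_block_dissipative: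
  fixes a b c \<gamma> \<beta> :: real
  assumes pos: "0 < a" "0 < b" "0 < c" "0 < \<gamma>" "0 < \<beta>" and below: "b * \<gamma> < a * c"
  obtains k r where "0 < k" "0 < r"
    "\<And>s E I. \<bar>s\<bar> \<le> r \<Longrightarrow>
       \<gamma> * E * (b * I + \<beta> * s * I - a * E) + b * I * (\<gamma> * E - c * I) \<le> - k * (E\<^sup>2 + I\<^sup>2)"
proof -
  have "\<gamma> / c < a / b" using below pos by (simp add: field_simps)
  then obtain t where t: "\<gamma> / c < t" "t < a / b" using dense by blast
  have t0: "0 < t" using t(1) pos by (meson divide_pos_pos less_trans)
  define k where "k = min (\<gamma> * (a - b * t)) (b * (c - \<gamma> / t)) / 2"
  have k: "0 < k" using t t0 pos by (simp add: k_def field_simps)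
  define r where "r = 2 * k / (\<gamma> * \<beta>)"
  have r: "0 < r" using k pos by (simp add: r_def)
  show ?thesis
  proof (rule that[OF k r])
    fix s E I assume s: "\<bar>s\<bar> \<le> r"
    have cross: "E * I \<le> (t / 2) * E\<^sup>2 + (1 / (2 * t)) * I\<^sup>2"
      using t0 by (intro mult_le_weighted_squares) auto
    have "\<gamma> * \<beta> * s * (E * I) \<le> \<gamma> * \<beta> * \<bar>s\<bar> * \<bar>E * I\<bar>"
      using pos abs_ge_self[of "\<gamma> * \<beta> * s * (E * I)"] by (simp add: abs_mult)
    also have "\<dots> \<le> \<gamma> * \<beta> * r * ((E\<^sup>2 + I\<^sup>2) / 2)"
      using pos s abs_mult_le_half_squares[of E I] by (intro mult_mono mult_left_mono) auto
    also have "\<dots> = k * (E\<^sup>2 + I\<^sup>2)" using pos by (simp add: r_def)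
    finally have perturbation: "\<gamma> * \<beta> * s * (E * I) \<le> k * (E\<^sup>2 + I\<^sup>2)" .
    have "\<gamma> * E * (b * I + \<beta> * s * I - a * E) + b * I * (\<gamma> * E - c * I)
        = - (a * \<gamma>) * E\<^sup>2 - (b * c) * I\<^sup>2 + (2 * b * \<gamma>) * (E * I) + \<gamma> * \<beta> * s * (E * I)"
      by (simp add: algebra_simps power2_eq_square)
    also have "\<dots> \<le> - (a * \<gamma>) * E\<^sup>2 - (b * c) * I\<^sup>2
        + (2 * b * \<gamma>) * ((t / 2) * E\<^sup>2 + (1 / (2 * t)) * I\<^sup>2) + k * (E\<^sup>2 + I\<^sup>2)"
      using cross perturbation pos by (intro add_mono diff_mono order_refl mult_left_mono) auto
    also have "\<dots> = - (\<gamma> * (a - b * t)) * E\<^sup>2 - (b * (c - \<gamma> / t)) * I\<^sup>2 + k * (E\<^sup>2 + I\<^sup>2)"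
      using t0 by (simp add: field_simps)
    also have "\<dots> \<le> - (2 * k) * E\<^sup>2 - (2 * k) * I\<^sup>2 + k * (E\<^sup>2 + I\<^sup>2)"
    proof -
      have "2 * k \<le> \<gamma> * (a - b * t)" "2 * k \<le> b * (c - \<gamma> / t)" by (simp_all add: k_def)
      then have "(2 * k) * E\<^sup>2 \<le> (\<gamma> * (a - b * t)) * E\<^sup>2" "(2 * k) * I\<^sup>2 \<le> (b * (c - \<gamma> / t)) * I\<^sup>2"
        by (simp_all add: mult_right_mono)
      then show ?thesis unfolding minus_mult_left by linarith
    qed
    also have "\<dots> = - k * (E\<^sup>2 + I\<^sup>2)"
      by (simp add: algebra_simps)
    finally show "\<gamma> * E * (b * I + \<beta> * s * I - a * E) + b * I * (\<gamma> * E - c * I) \<le> - k * (E\<^sup>2 + I\<^sup>2)" .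
  qed
qed

lemma susceptible_block_estimate:
  fixes \<pi> \<mu> \<theta> \<eta> \<beta> b s v I R :: real
  assumes pos: "0 < \<pi>" "0 < \<mu>" "0 < \<theta>" "0 < \<beta>" and I: "\<bar>I\<bar> \<le> \<mu> / (4 * \<beta>)"
  shows "\<pi> * s * (\<eta> * R + \<theta> * v - (\<pi> + \<mu>) * s - b * I - \<beta> * s * I) + \<theta> * v * (\<pi> * s - (\<theta> + \<mu>) * v)
    \<le> - (\<pi> * \<mu> / 4) * s\<^sup>2 - (\<theta> * \<mu>) * v\<^sup>2 + (\<pi> * b\<^sup>2 / \<mu>) * I\<^sup>2 + (\<pi> * \<eta>\<^sup>2 / \<mu>) * R\<^sup>2"
proof -
  have infection: "s * (- (b * I)) \<le> (\<mu> / 4) * s\<^sup>2 + (1 / \<mu>) * (- (b * I))\<^sup>2"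
    and recovery: "s * (\<eta> * R) \<le> (\<mu> / 4) * s\<^sup>2 + (1 / \<mu>) * (\<eta> * R)\<^sup>2"
    using pos by (intro mult_le_weighted_squares; simp)+
  have "\<beta> * s\<^sup>2 * (- I) \<le> \<beta> * s\<^sup>2 * \<bar>I\<bar>"
    using pos by (intro mult_left_mono) auto
  then have "- (\<beta> * s\<^sup>2 * I) \<le> \<beta> * s\<^sup>2 * \<bar>I\<bar>" by simp
  also have "\<dots> \<le> \<beta> * s\<^sup>2 * (\<mu> / (4 * \<beta>))"
    using pos I by (intro mult_left_mono) auto
  also have "\<dots> = (\<mu> / 4) * s\<^sup>2" using pos by simp
  finally have nonlinear: "- (\<beta> * s\<^sup>2 * I) \<le> (\<mu> / 4) * s\<^sup>2" .
  have "\<pi> * s * (\<eta> * R + \<theta> * v - (\<pi> + \<mu>) * s - b * I - \<beta> * s * I) + \<theta> * v * (\<pi> * s - (\<theta> + \<mu>) * v)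
      = - (\<pi> * s - \<theta> * v)\<^sup>2 - (\<pi> * \<mu>) * s\<^sup>2 - (\<theta> * \<mu>) * v\<^sup>2
        + \<pi> * (s * (- (b * I))) + \<pi> * (s * (\<eta> * R)) + \<pi> * (- (\<beta> * s\<^sup>2 * I))"
    by (simp add: algebra_simps power2_eq_square)
  also have "\<dots> \<le> 0 - (\<pi> * \<mu>) * s\<^sup>2 - (\<theta> * \<mu>) * v\<^sup>2
      + \<pi> * ((\<mu> / 4) * s\<^sup>2 + (1 / \<mu>) * (- (b * I))\<^sup>2) + \<pi> * ((\<mu> / 4) * s\<^sup>2 + (1 / \<mu>) * (\<eta> * R)\<^sup>2)
      + \<pi> * ((\<mu> / 4) * s\<^sup>2)"
    using infection recovery nonlinear pos by (intro add_mono diff_mono order_refl mult_left_mono) auto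
  also have "\<dots> = - (\<pi> * \<mu> / 4) * s\<^sup>2 - (\<theta> * \<mu>) * v\<^sup>2 + (\<pi> * b\<^sup>2 / \<mu>) * I\<^sup>2 + (\<pi> * \<eta>\<^sup>2 / \<mu>) * R\<^sup>2"
    using pos by (simp add: field_simps power2_eq_square)
  finally show ?thesis .
qed

lemma binary_quadratic_form_le:
  fixes x z E I :: real
  assumes "0 \<le> x"
  shows "x * E\<^sup>2 + 2 * E * I + z * I\<^sup>2 \<le> (x + 1 + \<bar>z\<bar>) * (E\<^sup>2 + I\<^sup>2)"
proof -
  have "2 * E * I \<le> E\<^sup>2 + I\<^sup>2" by (rule sum_squares_bound)
  moreover have "z * I\<^sup>2 \<le> \<bar>z\<bar> * I\<^sup>2" by (simp add: mult_right_mono)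
  moreover have "0 \<le> \<bar>z\<bar> * E\<^sup>2 + x * I\<^sup>2" using assms by simp
  ultimately show ?thesis by (simp add: algebra_simps)
qed

text \<open>For \<open>a c < b \<gamma>\<close> the form \<open>x E\<^sup>2 + 2 E I + z I\<^sup>2\<close> is a Chetaev function of the
  perturbed infected block; the right-hand sides below are its derivative along \<open>(E', I')\<close>.\<close>

lemma infected_block_chetaev:
  fixes a b c \<gamma> \<beta> :: real
  assumes pos: "0 < a" "0 < b" "0 < c" "0 < \<gamma>" "0 < \<beta>" and above: "a * c < b * \<gamma>"
  obtains x z r \<kappa> where "0 < x" "0 < r" "0 < \<kappa>"
    "\<And>s E I E' I'. \<bar>s\<bar> \<le> r \<Longrightarrow> E' = b * I + \<beta> * s * I - a * E \<Longrightarrow> I' = \<gamma> * E - c * I \<Longrightarrow>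
       0 \<le> 2 * x * E * E' + 2 * (E' * I + E * I') + 2 * z * I * I' \<and>
       \<kappa> * (x * E\<^sup>2 + 2 * E * I + z * I\<^sup>2) \<le> 2 * x * E * E' + 2 * (E' * I + E * I') + 2 * z * I * I'"
proof -
  have "(c * (a + c) - b * \<gamma>) / (b * c) < \<gamma> / a"
    using pos mult_pos_neg[of "a + c" "a * c - b * \<gamma>"] above by (simp add: field_simps)
  then have "max 0 ((c * (a + c) - b * \<gamma>) / (b * c)) < \<gamma> / a" using pos by simp
  then obtain x where x: "max 0 ((c * (a + c) - b * \<gamma>) / (b * c)) < x" "x < \<gamma> / a"
    using dense by blast
  \<comment> \<open>makes the \<open>E I\<close> terms of the derivative cancel\<close>
  define z where "z = (a + c - b * x) / \<gamma>"
  define \<sigma> where "\<sigma> = min (\<gamma> - a * x) (b - c * z) / 2"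
  have x0: "0 < x" using x by simp
  have "0 < \<gamma> - a * x" using x(2) pos by (simp add: field_simps)
  moreover have "0 < b - c * z"
    using x(1) pos by (simp add: z_def field_simps)
  ultimately have \<sigma>: "0 < \<sigma>" by (simp add: \<sigma>_def)
  define r where "r = \<sigma> / (\<beta> * (x + 1))"
  have r: "0 < r" using \<sigma> pos x0 by (simp add: r_def)
  define \<kappa> where "\<kappa> = 2 * \<sigma> / (x + 1 + \<bar>z\<bar>)"
  have \<kappa>: "0 < \<kappa>" using \<sigma> x0 by (simp add: \<kappa>_def add_pos_nonneg)
  show ?thesis
  proof (rule that[OF x0 r \<kappa>])
    fix s E I E' I' assume s: "\<bar>s\<bar> \<le> r"
      and E': "E' = b * I + \<beta> * s * I - a * E" and I': "I' = \<gamma> * E - c * I"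
    let ?W' = "2 * x * E * E' + 2 * (E' * I + E * I') + 2 * z * I * I'"
    have "?W' = 2 * ((\<gamma> - a * x) * E\<^sup>2 + (b - c * z) * I\<^sup>2 + \<beta> * s * (x * (E * I) + I\<^sup>2))"
      using pos by (simp add: E' I' z_def field_simps power2_eq_square)
    moreover have "(2 * \<sigma>) * E\<^sup>2 \<le> (\<gamma> - a * x) * E\<^sup>2" "(2 * \<sigma>) * I\<^sup>2 \<le> (b - c * z) * I\<^sup>2"
      by (simp_all add: \<sigma>_def mult_right_mono)
    moreover have "- (\<sigma> * (E\<^sup>2 + I\<^sup>2)) \<le> \<beta> * s * (x * (E * I) + I\<^sup>2)"
    proof -
      have "\<bar>x * (E * I) + I\<^sup>2\<bar> \<le> x * \<bar>E * I\<bar> + I\<^sup>2"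
        using x0 abs_triangle_ineq[of "x * (E * I)" "I\<^sup>2"] by (simp add: abs_mult)
      also have "\<dots> \<le> x * ((E\<^sup>2 + I\<^sup>2) / 2) + I\<^sup>2"
        using x0 abs_mult_le_half_squares[of E I] by (simp add: mult_left_mono)
      also have "\<dots> \<le> (x + 1) * (E\<^sup>2 + I\<^sup>2)"
        using x0 by (simp add: algebra_simps)
      finally have "\<bar>\<beta> * s * (x * (E * I) + I\<^sup>2)\<bar> \<le> \<beta> * r * ((x + 1) * (E\<^sup>2 + I\<^sup>2))"
        unfolding abs_mult using pos s by (intro mult_mono) auto
      also have "\<dots> = \<sigma> * (E\<^sup>2 + I\<^sup>2)" using pos x0 by (simp add: r_def)
      finally show ?thesis by (simp add: abs_le_iff)
    qed
    ultimately have lower: "2 * \<sigma> * (E\<^sup>2 + I\<^sup>2) \<le> ?W'"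
      unfolding minus_mult_left by (simp add: algebra_simps)
    have "\<kappa> * (x * E\<^sup>2 + 2 * E * I + z * I\<^sup>2) \<le> \<kappa> * ((x + 1 + \<bar>z\<bar>) * (E\<^sup>2 + I\<^sup>2))"
      using \<kappa> binary_quadratic_form_le[of x] x0 by (simp add: mult_left_mono)
    also have "\<dots> = 2 * \<sigma> * (E\<^sup>2 + I\<^sup>2)" using x0 by (simp add: \<kappa>_def add_pos_nonneg)
    finally have "\<kappa> * (x * E\<^sup>2 + 2 * E * I + z * I\<^sup>2) \<le> ?W'" using lower by linarith
    moreover have "0 \<le> 2 * \<sigma> * (E\<^sup>2 + I\<^sup>2)" using \<sigma> by simp
    ultimately show "0 \<le> ?W' \<and> \<kappa> * (x * E\<^sup>2 + 2 * E * I + z * I\<^sup>2) \<le> ?W'"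
      using lower by linarith
  qed
qed

text \<open>Quadratic Lyapunov function for the deviations \<open>(s, v, E, I, T, R)\<close> from the disease-free
  equilibrium: the weights \<open>C\<close>, \<open>B\<close>, \<open>A\<close> are chosen in this order, each one large enough to absorb
  the cross term produced by the class feeding into it.\<close>

lemma sveitrs_lyapunov_weights:
  fixes a b c d m \<gamma> \<beta> \<eta> \<pi> \<theta> \<mu> \<delta> \<alpha> :: real
  assumes pos: "0 < a" "0 < b" "0 < c" "0 < d" "0 < m" "0 < \<gamma>" "0 < \<beta>" "0 < \<eta>" "0 < \<pi>"
      "0 < \<theta>" "0 < \<mu>" "0 < \<delta>" "0 < \<alpha>"
    and below: "b * \<gamma> < a * c"
  obtains A B C r \<kappa> where "0 < A" "0 < B" "0 < C" "0 < r" "0 < \<kappa>"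
    "\<And>s v E I T R. \<bar>s\<bar> \<le> r \<Longrightarrow> \<bar>I\<bar> \<le> r \<Longrightarrow>
      A * (\<gamma> * E * (b * I + \<beta> * s * I - a * E) + b * I * (\<gamma> * E - c * I))
      + B * (T * (\<delta> * I - d * T)) + C * (R * (\<alpha> * T - m * R))
      + (\<pi> * s * (\<eta> * R + \<theta> * v - (\<pi> + \<mu>) * s - b * I - \<beta> * s * I) + \<theta> * v * (\<pi> * s - (\<theta> + \<mu>) * v))
      \<le> - \<kappa> * (s\<^sup>2 + v\<^sup>2 + E\<^sup>2 + I\<^sup>2 + T\<^sup>2 + R\<^sup>2)"
proof -
  obtain k r0 where k: "0 < k" and r0: "0 < r0" and infected: "\<And>s E I. \<bar>s\<bar> \<le> r0 \<Longrightarrow>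
      \<gamma> * E * (b * I + \<beta> * s * I - a * E) + b * I * (\<gamma> * E - c * I) \<le> - k * (E\<^sup>2 + I\<^sup>2)"
    using infected_block_dissipative[OF pos(1-3,6,7) below] by blast
  define C where "C = 2 * (\<pi> * \<eta>\<^sup>2 / \<mu> + 1) / m"
  define B where "B = 2 * (C * \<alpha>\<^sup>2 / (2 * m) + 1) / d"
  define A where "A = (\<pi> * b\<^sup>2 / \<mu> + B * \<delta>\<^sup>2 / (2 * d) + 1) / k"
  have C: "0 < C" using pos by (simp add: C_def add_nonneg_pos)
  have B: "0 < B" using pos C by (simp add: B_def add_nonneg_pos)
  have A: "0 < A" using pos B k by (simp add: A_def add_nonneg_pos)
  define r where "r = min r0 (\<mu> / (4 * \<beta>))"
  have r: "0 < r" using r0 pos by (simp add: r_def)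
  define \<kappa> where "\<kappa> = min (min (A * k) 1) (min (\<pi> * \<mu> / 4) (\<theta> * \<mu>))"
  have \<kappa>: "0 < \<kappa>" using A k pos by (simp add: \<kappa>_def)
  show ?thesis
  proof (rule that[OF A B C r \<kappa>])
    fix s v E I T R assume s: "\<bar>s\<bar> \<le> r" and I: "\<bar>I\<bar> \<le> r"
    have "A * (\<gamma> * E * (b * I + \<beta> * s * I - a * E) + b * I * (\<gamma> * E - c * I))
        + B * (T * (\<delta> * I - d * T)) + C * (R * (\<alpha> * T - m * R))
        + (\<pi> * s * (\<eta> * R + \<theta> * v - (\<pi> + \<mu>) * s - b * I - \<beta> * s * I) + \<theta> * v * (\<pi> * s - (\<theta> + \<mu>) * v))
      \<le> A * (- k * (E\<^sup>2 + I\<^sup>2)) + B * (- (d / 2) * T\<^sup>2 + (\<delta>\<^sup>2 / (2 * d)) * I\<^sup>2)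
        + C * (- (m / 2) * R\<^sup>2 + (\<alpha>\<^sup>2 / (2 * m)) * T\<^sup>2)
        + (- (\<pi> * \<mu> / 4) * s\<^sup>2 - (\<theta> * \<mu>) * v\<^sup>2 + (\<pi> * b\<^sup>2 / \<mu>) * I\<^sup>2 + (\<pi> * \<eta>\<^sup>2 / \<mu>) * R\<^sup>2)"
      using s I A B C pos
      by (intro add_mono mult_left_mono infected linear_decay_estimate susceptible_block_estimate)
        (auto simp: r_def)
    also have "\<dots> = - (A * k) * E\<^sup>2 - I\<^sup>2 - T\<^sup>2 - R\<^sup>2 - (\<pi> * \<mu> / 4) * s\<^sup>2 - (\<theta> * \<mu>) * v\<^sup>2"
      using pos k by (simp add: A_def B_def C_def field_simps)
    also have "\<dots> \<le> - \<kappa> * (s\<^sup>2 + v\<^sup>2 + E\<^sup>2 + I\<^sup>2 + T\<^sup>2 + R\<^sup>2)"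
    proof -
      have "\<kappa> \<le> A * k" "\<kappa> \<le> 1" "\<kappa> \<le> \<pi> * \<mu> / 4" "\<kappa> \<le> \<theta> * \<mu>" by (auto simp: \<kappa>_def)
      then have "\<kappa> * E\<^sup>2 \<le> (A * k) * E\<^sup>2" "\<kappa> * I\<^sup>2 \<le> 1 * I\<^sup>2" "\<kappa> * T\<^sup>2 \<le> 1 * T\<^sup>2"
          "\<kappa> * R\<^sup>2 \<le> 1 * R\<^sup>2" "\<kappa> * s\<^sup>2 \<le> (\<pi> * \<mu> / 4) * s\<^sup>2" "\<kappa> * v\<^sup>2 \<le> (\<theta> * \<mu>) * v\<^sup>2"
        by (meson mult_right_mono zero_le_power2)+
      then show ?thesis unfolding minus_mult_left by (simp add: algebra_simps)
    qed
    finally show "A * (\<gamma> * E * (b * I + \<beta> * s * I - a * E) + b * I * (\<gamma> * E - c * I))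
      + B * (T * (\<delta> * I - d * T)) + C * (R * (\<alpha> * T - m * R))
      + (\<pi> * s * (\<eta> * R + \<theta> * v - (\<pi> + \<mu>) * s - b * I - \<beta> * s * I) + \<theta> * v * (\<pi> * s - (\<theta> + \<mu>) * v))
      \<le> - \<kappa> * (s\<^sup>2 + v\<^sup>2 + E\<^sup>2 + I\<^sup>2 + T\<^sup>2 + R\<^sup>2)" .
  qed
qed

section \<open>The SVEITRS model\<close>

locale sveitrs_model =
  fixes \<Lambda> \<beta> \<gamma> \<mu> \<pi> \<eta> \<theta> \<delta> \<tau> \<alpha> \<omega> :: real
  assumes pos: "0 < \<Lambda>" "0 < \<beta>" "0 < \<gamma>" "0 < \<mu>" "0 < \<pi>" "0 < \<eta>" "0 < \<theta>"
    "0 < \<delta>" "0 < \<tau>" "0 < \<alpha>" "0 < \<omega>"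
begin

abbreviation f :: "real^6 \<Rightarrow> real^6" where "f \<equiv> sveitrs \<Lambda> \<beta> \<gamma> \<mu> \<pi> \<eta> \<theta> \<delta> \<tau> \<alpha> \<omega>"
abbreviation e :: "real^6" where "e \<equiv> dfe \<Lambda> \<mu> \<pi> \<theta>"

definition S\<^sub>0 :: real where "S\<^sub>0 = \<Lambda> * (\<theta> + \<mu>) / (\<mu> * (\<theta> + \<pi> + \<mu>))"
definition V\<^sub>0 :: real where "V\<^sub>0 = \<Lambda> * \<pi> / (\<mu> * (\<theta> + \<pi> + \<mu>))"

lemma S\<^sub>0_pos: "0 < S\<^sub>0"
  using pos by (simp add: S\<^sub>0_def)

lemma dfe_nth: "e$1 = S\<^sub>0" "e$2 = V\<^sub>0" "e$3 = 0" "e$4 = 0" "e$5 = 0" "e$6 = 0"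
  by (simp_all add: dfe_def S\<^sub>0_def V\<^sub>0_def)

lemma Rv_eq: "Rv \<Lambda> \<beta> \<gamma> \<mu> \<pi> \<theta> \<delta> \<tau> = \<beta> * S\<^sub>0 * \<gamma> / ((\<gamma> + \<mu>) * (\<delta> + \<tau> + \<mu>))"
  using pos by (simp add: Rv_def S\<^sub>0_def field_simps)

lemma sveitrs_deviation:
  "f x $ 1 = \<eta> * x$6 + \<theta> * (x$2 - V\<^sub>0) - (\<pi> + \<mu>) * (x$1 - S\<^sub>0) - \<beta> * S\<^sub>0 * x$4 - \<beta> * (x$1 - S\<^sub>0) * x$4"
  "f x $ 2 = \<pi> * (x$1 - S\<^sub>0) - (\<theta> + \<mu>) * (x$2 - V\<^sub>0)"
  "f x $ 3 = \<beta> * S\<^sub>0 * x$4 + \<beta> * (x$1 - S\<^sub>0) * x$4 - (\<gamma> + \<mu>) * x$3"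
  "f x $ 4 = \<gamma> * x$3 - (\<delta> + \<tau> + \<mu>) * x$4"
  "f x $ 5 = \<delta> * x$4 - (\<alpha> + \<omega> + \<mu>) * x$5"
  "f x $ 6 = \<alpha> * x$5 - (\<eta> + \<mu>) * x$6"
proof -
  define D where "D = \<mu> * (\<theta> + \<pi> + \<mu>)"
  have D: "D \<noteq> 0" using pos by (simp add: D_def)
  have SV: "S\<^sub>0 = \<Lambda> * (\<theta> + \<mu>) / D" "V\<^sub>0 = \<Lambda> * \<pi> / D" by (simp_all add: S\<^sub>0_def V\<^sub>0_def D_def)
  have "\<Lambda> + \<theta> * V\<^sub>0 - (\<pi> + \<mu>) * S\<^sub>0 = \<Lambda> * (D - \<mu> * (\<theta> + \<pi> + \<mu>)) / D"
    and "\<pi> * S\<^sub>0 - (\<theta> + \<mu>) * V\<^sub>0 = 0"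
    unfolding SV using D by (simp_all add: field_simps)
  then have "\<Lambda> + \<theta> * V\<^sub>0 - (\<pi> + \<mu>) * S\<^sub>0 = 0" "\<pi> * S\<^sub>0 - (\<theta> + \<mu>) * V\<^sub>0 = 0"
    by (simp_all add: D_def)
  then show "f x $ 1 = \<eta> * x$6 + \<theta> * (x$2 - V\<^sub>0) - (\<pi> + \<mu>) * (x$1 - S\<^sub>0) - \<beta> * S\<^sub>0 * x$4 - \<beta> * (x$1 - S\<^sub>0) * x$4"
    and "f x $ 2 = \<pi> * (x$1 - S\<^sub>0) - (\<theta> + \<mu>) * (x$2 - V\<^sub>0)"
    by (simp_all add: sveitrs_nth algebra_simps)
qed (simp_all add: sveitrs_nth algebra_simps)

lemma dist_dfe_squared:
  "(dist x e)\<^sup>2 = (x$1 - S\<^sub>0)\<^sup>2 + (x$2 - V\<^sub>0)\<^sup>2 + (x$3)\<^sup>2 + (x$4)\<^sup>2 + (x$5)\<^sup>2 + (x$6)\<^sup>2"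
  using norm_vec6_squared[of "x - e"] by (simp add: dist_norm dfe_nth)

lemma abs_deviation_le_dist: "\<bar>x$i - e$i\<bar> \<le> dist x e"
  using dist_vec_nth_le[of x i e] by (simp add: dist_real_def)

definition lyapunov :: "real \<Rightarrow> real \<Rightarrow> real \<Rightarrow> real^6 \<Rightarrow> real" where
  "lyapunov A B C y = A * (\<gamma> * (y$3)\<^sup>2 + \<beta> * S\<^sub>0 * (y$4)\<^sup>2) + B * (y$5)\<^sup>2 + C * (y$6)\<^sup>2
     + \<pi> * (y$1 - S\<^sub>0)\<^sup>2 + \<theta> * (y$2 - V\<^sub>0)\<^sup>2"

definition lyapunov_rate :: "real \<Rightarrow> real \<Rightarrow> real \<Rightarrow> real^6 \<Rightarrow> real" where
  "lyapunov_rate A B C y = 2 * (A * (\<gamma> * y$3 * f y $ 3 + \<beta> * S\<^sub>0 * y$4 * f y $ 4) + B * (y$5 * f y $ 5)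
     + C * (y$6 * f y $ 6) + (\<pi> * (y$1 - S\<^sub>0) * f y $ 1 + \<theta> * (y$2 - V\<^sub>0) * f y $ 2))"

lemma lyapunov_has_derivative_along:
  assumes "(x has_vector_derivative f (x t)) (at t within J)"
  shows "((\<lambda>t. lyapunov A B C (x t)) has_real_derivative lyapunov_rate A B C (x t)) (at t within J)"
  unfolding lyapunov_def lyapunov_rate_def
  by (auto intro!: derivative_eq_intros has_real_derivative_vec_nth[OF assms]
      simp: algebra_simps power2_eq_square)

lemma lyapunov_comparable:
  assumes "0 < A" "0 < B" "0 < C"
  obtains m M where "0 < m" "m \<le> M"
    "\<And>y. m * (dist y e)\<^sup>2 \<le> lyapunov A B C y" "\<And>y. lyapunov A B C y \<le> M * (dist y e)\<^sup>2"
proof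
  let ?w = "{A * \<gamma>, A * (\<beta> * S\<^sub>0), B, C, \<pi>, \<theta>}"
  have w_pos: "0 < w" if "w \<in> ?w" for w
    using that assms pos S\<^sub>0_pos by auto
  show "0 < Min ?w" using w_pos by simp
  show "Min ?w \<le> Max ?w" by (rule order_trans[of _ \<pi>]) simp_all
  have eq: "lyapunov A B C y = \<pi> * (y$1 - S\<^sub>0)\<^sup>2 + \<theta> * (y$2 - V\<^sub>0)\<^sup>2 + (A * \<gamma>) * (y$3)\<^sup>2
      + (A * (\<beta> * S\<^sub>0)) * (y$4)\<^sup>2 + B * (y$5)\<^sup>2 + C * (y$6)\<^sup>2" for y
    by (simp add: lyapunov_def algebra_simps)
  fix y
  show "Min ?w * (dist y e)\<^sup>2 \<le> lyapunov A B C y"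
    unfolding eq dist_dfe_squared distrib_left by (intro add_mono mult_right_mono) auto
  show "lyapunov A B C y \<le> Max ?w * (dist y e)\<^sup>2"
    unfolding eq dist_dfe_squared distrib_left by (intro add_mono mult_right_mono) auto
qed

lemma locally_asymptotically_stable_if_Rv_less_1:
  assumes "Rv \<Lambda> \<beta> \<gamma> \<mu> \<pi> \<theta> \<delta> \<tau> < 1"
  shows "locally_asymptotically_stable f e"
proof -
  have below: "\<beta> * S\<^sub>0 * \<gamma> < (\<gamma> + \<mu>) * (\<delta> + \<tau> + \<mu>)"
    using assms pos by (simp add: Rv_eq divide_less_eq)
  have rates: "0 < \<gamma> + \<mu>" "0 < \<beta> * S\<^sub>0" "0 < \<delta> + \<tau> + \<mu>" "0 < \<alpha> + \<omega> + \<mu>" "0 < \<eta> + \<mu>"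
    using pos S\<^sub>0_pos by simp_all
  obtain A B C r \<kappa> where ABC: "0 < A" "0 < B" "0 < C" and r: "0 < r" and \<kappa>: "0 < \<kappa>"
    and weights: "\<And>s v E I T R. \<bar>s\<bar> \<le> r \<Longrightarrow> \<bar>I\<bar> \<le> r \<Longrightarrow>
      A * (\<gamma> * E * (\<beta> * S\<^sub>0 * I + \<beta> * s * I - (\<gamma> + \<mu>) * E) + \<beta> * S\<^sub>0 * I * (\<gamma> * E - (\<delta> + \<tau> + \<mu>) * I))
      + B * (T * (\<delta> * I - (\<alpha> + \<omega> + \<mu>) * T)) + C * (R * (\<alpha> * T - (\<eta> + \<mu>) * R))
      + (\<pi> * s * (\<eta> * R + \<theta> * v - (\<pi> + \<mu>) * s - \<beta> * S\<^sub>0 * I - \<beta> * s * I)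
         + \<theta> * v * (\<pi> * s - (\<theta> + \<mu>) * v))
      \<le> - \<kappa> * (s\<^sup>2 + v\<^sup>2 + E\<^sup>2 + I\<^sup>2 + T\<^sup>2 + R\<^sup>2)"
    using sveitrs_lyapunov_weights[OF rates pos(3,2,6,5,7,4,8,10) below] by metis
  obtain m M where m: "0 < m" "m \<le> M" and lower: "\<And>y. m * (dist y e)\<^sup>2 \<le> lyapunov A B C y"
    and upper: "\<And>y. lyapunov A B C y \<le> M * (dist y e)\<^sup>2"
    using lyapunov_comparable[OF ABC] by blast
  have "lyapunov_rate A B C y \<le> - (2 * \<kappa> / M) * lyapunov A B C y" if "dist y e \<le> r" for y
  proof -
    have "\<bar>y$1 - S\<^sub>0\<bar> \<le> r" "\<bar>y$4\<bar> \<le> r"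
      using abs_deviation_le_dist[of y 1] abs_deviation_le_dist[of y 4] that by (simp_all add: dfe_nth)
    then have "lyapunov_rate A B C y \<le> 2 * (- \<kappa> * (dist y e)\<^sup>2)"
      unfolding lyapunov_rate_def sveitrs_deviation dist_dfe_squared
      by (intro mult_left_mono weights) simp_all
    moreover have "(2 * \<kappa> / M) * lyapunov A B C y \<le> (2 * \<kappa> / M) * (M * (dist y e)\<^sup>2)"
      using upper[of y] \<kappa> m by (intro mult_left_mono) auto
    ultimately show ?thesis using m by simp
  qed
  then interpret quadratic_lyapunov_function f e "lyapunov A B C" "lyapunov_rate A B C" m M r "2 * \<kappa> / M"
    using m r \<kappa> lower upper lyapunov_has_derivative_along by unfold_locales auto
  show ?thesis by (rule locally_asymptotically_stable)
qed

definition chetaev :: "real \<Rightarrow> real \<Rightarrow> real^6 \<Rightarrow> real" where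
  "chetaev x z y = x * (y$3)\<^sup>2 + 2 * y$3 * y$4 + z * (y$4)\<^sup>2"

definition chetaev_rate :: "real \<Rightarrow> real \<Rightarrow> real^6 \<Rightarrow> real" where
  "chetaev_rate x z y = 2 * x * y$3 * f y $ 3 + 2 * (f y $ 3 * y$4 + y$3 * f y $ 4) + 2 * z * y$4 * f y $ 4"

lemma chetaev_has_derivative_along:
  assumes "(y has_vector_derivative f (y t)) (at t within J)"
  shows "((\<lambda>t. chetaev x z (y t)) has_real_derivative chetaev_rate x z (y t)) (at t within J)"
  unfolding chetaev_def chetaev_rate_def
  by (auto intro!: derivative_eq_intros has_real_derivative_vec_nth[OF assms]
      simp: algebra_simps power2_eq_square)

lemma unstable_if_Rv_greater_1:
  assumes "1 < Rv \<Lambda> \<beta> \<gamma> \<mu> \<pi> \<theta> \<delta> \<tau>"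
  shows "unstable_equilibrium f e"
proof -
  have above: "(\<gamma> + \<mu>) * (\<delta> + \<tau> + \<mu>) < \<beta> * S\<^sub>0 * \<gamma>"
    using assms pos by (simp add: Rv_eq less_divide_eq)
  have rates: "0 < \<gamma> + \<mu>" "0 < \<beta> * S\<^sub>0" "0 < \<delta> + \<tau> + \<mu>"
    using pos S\<^sub>0_pos by simp_all
  obtain x z r \<kappa> where x: "0 < x" and r: "0 < r" and \<kappa>: "0 < \<kappa>"
    and form: "\<And>s E I E' I'. \<bar>s\<bar> \<le> r \<Longrightarrow> E' = \<beta> * S\<^sub>0 * I + \<beta> * s * I - (\<gamma> + \<mu>) * E \<Longrightarrow>
       I' = \<gamma> * E - (\<delta> + \<tau> + \<mu>) * I \<Longrightarrow>
       0 \<le> 2 * x * E * E' + 2 * (E' * I + E * I') + 2 * z * I * I' \<and>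
       \<kappa> * (x * E\<^sup>2 + 2 * E * I + z * I\<^sup>2) \<le> 2 * x * E * E' + 2 * (E' * I + E * I') + 2 * z * I * I'"
    using infected_block_chetaev[OF rates pos(3,2) above] by metis
  have growth: "0 \<le> chetaev_rate x z y \<and> \<kappa> * chetaev x z y \<le> chetaev_rate x z y" if "dist y e \<le> r" for y
    using form[where s = "y$1 - S\<^sub>0" and E = "y$3" and I = "y$4", OF _ refl refl]
      abs_deviation_le_dist[of y 1] that
    by (simp add: chetaev_def chetaev_rate_def sveitrs_deviation dfe_nth)
  have bounded: "chetaev x z y \<le> (x + 1 + \<bar>z\<bar>) * (2 * r\<^sup>2)" if "dist y e \<le> r" for y
  proof -
    have "\<bar>y$3\<bar> \<le> r" "\<bar>y$4\<bar> \<le> r"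
      using order_trans[OF abs_deviation_le_dist that, of 3] order_trans[OF abs_deviation_le_dist that, of 4]
      by (simp_all add: dfe_nth)
    then have "(y$3)\<^sup>2 \<le> r\<^sup>2" "(y$4)\<^sup>2 \<le> r\<^sup>2" using r by (simp_all add: power2_le_iff_abs_le)
    then have "(x + 1 + \<bar>z\<bar>) * ((y$3)\<^sup>2 + (y$4)\<^sup>2) \<le> (x + 1 + \<bar>z\<bar>) * (2 * r\<^sup>2)"
      using x by (intro mult_left_mono) auto
    then show ?thesis
      using binary_quadratic_form_le[of x "y$3" "y$4" z] x by (simp add: chetaev_def)
  qed
  have positive_near: "\<exists>p. dist p e < d \<and> 0 < chetaev x z p" if "0 < d" for d
  proof
    let ?p = "e + (d / 2) *\<^sub>R axis 3 1"
    have "?p $ 3 = d / 2" "?p $ 4 = 0" by (simp_all add: dfe_nth axis_def)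
    then show "dist ?p e < d \<and> 0 < chetaev x z ?p"
      using that x by (simp add: dist_norm chetaev_def)
  qed
  interpret chetaev_function f e "chetaev x z" "chetaev_rate x z" r \<kappa> "(x + 1 + \<bar>z\<bar>) * (2 * r\<^sup>2)"
    using r \<kappa> growth bounded positive_near chetaev_has_derivative_along sveitrs_lipschitz_on_bounded
    by unfold_locales auto
  show ?thesis unfolding unstable_equilibrium_def by (rule not_lyapunov_stable)
qed

end

theorem theorem3:
  fixes \<Lambda> \<beta> \<gamma> \<mu> \<pi> \<eta> \<theta> \<delta> \<tau> \<alpha> \<omega> :: real
  assumes "\<Lambda> > 0" "\<beta> > 0" "\<gamma> > 0" "\<mu> > 0" "\<pi> > 0" "\<eta> > 0" "\<theta> > 0"
          "\<delta> > 0" "\<tau> > 0" "\<alpha> > 0" "\<omega> > 0"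
  shows "(Rv \<Lambda> \<beta> \<gamma> \<mu> \<pi> \<theta> \<delta> \<tau> < 1 \<longrightarrow>
            locally_asymptotically_stable (sveitrs \<Lambda> \<beta> \<gamma> \<mu> \<pi> \<eta> \<theta> \<delta> \<tau> \<alpha> \<omega>) (dfe \<Lambda> \<mu> \<pi> \<theta>))
       \<and> (Rv \<Lambda> \<beta> \<gamma> \<mu> \<pi> \<theta> \<delta> \<tau> > 1 \<longrightarrow>
            unstable_equilibrium (sveitrs \<Lambda> \<beta> \<gamma> \<mu> \<pi> \<eta> \<theta> \<delta> \<tau> \<alpha> \<omega>) (dfe \<Lambda> \<mu> \<pi> \<theta>))"
proof -
  interpret sveitrs_model \<Lambda> \<beta> \<gamma> \<mu> \<pi> \<eta> \<theta> \<delta> \<tau> \<alpha> \<omega>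
    using assms by unfold_locales
  show ?thesis
    using locally_asymptotically_stable_if_Rv_less_1 unstable_if_Rv_greater_1 by blast
qed

end
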